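(* Let $(P_n(x))_{n \ge 0}$ be a splitting sequence with binary string $s_0 s_1 s_2 \ldots$, and let $m \in \mathbb{N}_0$ be such that $P_m(x)$ is irreducible in $\mathbb{Z}[x]$. Then for every $k \in \mathbb{N}_0$, $P_{m+k}(x)$ divides $P_m(x^{2^\ell})$ in $\mathbb{Z}[x]$, where $\ell = |\{ i \in \{m, \dots, m+k-1\} : s_i = L\}|$.
   Context: Splitting sequence of an irreducible $P \in \mathbb{Z}[x]$: a sequence $(P_n)_{n \ge 0}$ in $\mathbb{Z}[x]$ with $P_0 = P$ such that for each $n$: if $P_n$ is irreducible in $\mathbb{Z}[x]$, then $P_{n+1}(x) = P_n(x^2)$; if $P_n$ is reducible, then (as $n \ge 1$, $P_{n-1}$ is irreducible and $P_n(x) = P_{n-1}(x^2)$ factors in $\mathbb{Z}[x]$ as a product of exactly two irreducibles) $P_{n+1}$ is one of these two irreducible factors. Its binary string is $s_0 s_1 \ldots$ with $s_n = L$ if $P_n$ is irreducible and $s_n = S$ otherwise. *)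

theory Defs
  imports "HOL-Computational_Algebra.Polynomial_Factorial"
begin

definition sq_subst :: "int poly \<Rightarrow> int poly" where
  "sq_subst p = pcompose p (monom 1 2)"

definition splitting_seq :: "(nat \<Rightarrow> int poly) \<Rightarrow> bool" where
  "splitting_seq P \<longleftrightarrow> irreducible (P 0) \<and>
     (\<forall>n. (irreducible (P n) \<longrightarrow> P (Suc n) = sq_subst (P n)) \<and>
          (\<not> irreducible (P n) \<longrightarrow>
             (\<exists>A B. irreducible A \<and> irreducible B \<and> P n = A * B \<and>
                    (P (Suc n) = A \<or> P (Suc n) = B))))"

datatype letter = L | S

definition split_string :: "(nat \<Rightarrow> int poly) \<Rightarrow> nat \<Rightarrow> letter" where
  "split_string P n = (if irreducible (P n) then L else S)"

end

theory Submission
  imports Defs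
begin

text \<open>Each step of a splitting sequence either substitutes \<open>x \<mapsto> x^2\<close> (at an \<open>L\<close>)
  or passes to a factor (at an \<open>S\<close>). Substitution preserves divisibility, and the
  \<open>\<ell>\<close> substitutions compose to the single substitution \<open>x \<mapsto> x^(2^\<ell>)\<close>.\<close>

lemma pcompose_monom_monom:
  "pcompose (monom (1::'a::comm_semiring_1) a) (monom 1 b) = monom 1 (a * b)"
proof (induction a)
  case 0
  then show ?case by (simp add: one_pCons)
next
  case (Suc a)
  have "pcompose (monom (1::'a) (Suc a)) (monom 1 b) = monom 1 b * monom 1 (a * b)"
    by (simp add: monom_Suc pcompose_pCons Suc)
  then show ?case by (simp add: mult_monom add.commute)
qed

lemma pcompose_dvd_pcompose:
  fixes p q r :: "'a::comm_semiring_1 poly"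
  assumes "p dvd q"
  shows "pcompose p r dvd pcompose q r"
  using assms by (metis dvdE dvd_triv_left pcompose_mult)

lemma card_filter_atLeastLessThan_Suc:
  "card {i \<in> {m..<m + Suc k}. Q i} = card {i \<in> {m..<m + k}. Q i} + (if Q (m + k) then 1 else 0)"
proof -
  have "{i \<in> {m..<m + Suc k}. Q i} =
      (if Q (m + k) then insert (m + k) {i \<in> {m..<m + k}. Q i} else {i \<in> {m..<m + k}. Q i})"
    by (auto simp: less_Suc_eq)
  then show ?thesis by simp
qed

lemma dvd_pcompose_monom_power_count:
  fixes P :: "nat \<Rightarrow> 'a::comm_semiring_1 poly" and Q :: "nat \<Rightarrow> bool"
  assumes subst: "\<And>n. Q n \<Longrightarrow> P (Suc n) dvd pcompose (P n) (monom 1 2)"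
    and factor: "\<And>n. \<not> Q n \<Longrightarrow> P (Suc n) dvd P n"
  shows "P (m + k) dvd pcompose (P m) (monom 1 (2 ^ card {i \<in> {m..<m + k}. Q i}))"
proof (induction k)
  case 0
  have "monom (1::'a) 1 = [:0, 1:]"
    by (simp add: monom_Suc one_pCons)
  then show ?case by simp
next
  case (Suc k)
  define l where "l = card {i \<in> {m..<m + k}. Q i}"
  have IH: "P (m + k) dvd pcompose (P m) (monom 1 (2 ^ l))"
    using Suc.IH by (simp add: l_def)
  show ?case
  proof (cases "Q (m + k)")
    case True
    have "P (Suc (m + k)) dvd pcompose (pcompose (P m) (monom 1 (2 ^ l))) (monom 1 2)"
      using subst[OF True] pcompose_dvd_pcompose[OF IH] by (rule dvd_trans)
    also have "\<dots> = pcompose (P m) (monom 1 (2 ^ Suc l))"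
      by (simp add: pcompose_assoc[symmetric] pcompose_monom_monom mult.commute)
    finally show ?thesis
      using True unfolding card_filter_atLeastLessThan_Suc l_def by simp
  next
    case False
    then show ?thesis
      using factor[OF False] IH dvd_trans unfolding card_filter_atLeastLessThan_Suc l_def by auto
  qed
qed

lemma splitting_seq_Suc_irreducible:
  assumes "splitting_seq P" and "irreducible (P n)"
  shows "P (Suc n) = pcompose (P n) (monom 1 2)"
  using assms by (simp add: splitting_seq_def sq_subst_def)

lemma splitting_seq_Suc_dvd_reducible:
  assumes "splitting_seq P" and "\<not> irreducible (P n)"
  shows "P (Suc n) dvd P n"
proof -
  obtain A B where "P n = A * B" and "P (Suc n) = A \<or> P (Suc n) = B"
    using assms unfolding splitting_seq_def by blast
  then show ?thesis by auto
qed

theorem lemma3p14: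
  fixes P :: "nat \<Rightarrow> int poly" and m k :: nat
  assumes "splitting_seq P"
    and "irreducible (P m)"
  shows "P (m + k) dvd
           pcompose (P m)
             (monom 1 (2 ^ card {i \<in> {m..<m + k}. split_string P i = L}))"
proof (rule dvd_pcompose_monom_power_count)
  fix n
  show "split_string P n = L \<Longrightarrow> P (Suc n) dvd pcompose (P n) (monom 1 2)"
    using splitting_seq_Suc_irreducible[OF assms(1)] by (simp add: split_string_def split: if_splits)
  show "split_string P n \<noteq> L \<Longrightarrow> P (Suc n) dvd P n"
    using splitting_seq_Suc_dvd_reducible[OF assms(1)] by (simp add: split_string_def split: if_splits)
qed

end
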